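(* Let $G=\mathbf{R}^k\times H$ where $H$ is a locally compact group having a compact open subgroup. Let $L$ be a closed subgroup of $G$ and let $L_1$ be the closure of the projection of $L$ to $H$. Then the path-connected component of $L$ in $\mathcal{S}(G)$ contains all subgroups $W\times L_1$ with $W$ a closed subgroup of $\mathbf{R}^k$. In particular, if $k\ge1$, the path-connected component of $L$ in $\mathcal{S}(G)$ is not reduced to $\{L\}$.
   Context: $\mathcal{S}(G)$ is the space of closed subgroups of $G$ with the Chabauty topology (basic open sets $\{F: F\cap K=\emptyset,\ F\cap U_i\ne\emptyset\ \forall i\}$, $K$ compact, $U_i$ open). *)

theory Defs
  imports "HOL-Analysis.Analysis"
begin

definition is_subgroup :: "'a::group_add set \<Rightarrow> bool" where
  "is_subgroup S \<longleftrightarrow> 0 \<in> S \<and> (\<forall>x\<in>S. \<forall>y\<in>S. x + y \<in> S) \<and> (\<forall>x\<in>S. - x \<in> S)"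

definition closed_subgroup :: "'a::{group_add,topological_space} set \<Rightarrow> bool" where
  "closed_subgroup S \<longleftrightarrow> closed S \<and> is_subgroup S"

text \<open>The Chabauty topology on the space S(G) of closed subgroups: generated by the sets
  {F. F \<inter> K = {}} (K compact) and {F. F \<inter> U \<noteq> {}} (U open), restricted to closed subgroups.
  (Finite intersections of subbasic sets give exactly the basic open sets of the paper.)\<close>
definition chabauty :: "'a::{group_add,topological_space} set topology" where
  "chabauty = subtopology
     (topology_generated_by
        ({{F. F \<inter> K = {}} | K. compact K} \<union> {{F. F \<inter> U \<noteq> {}} | U. open U}))
     {S. closed_subgroup S}"

end

theory Submission
  imports Defs
begin

(*
  All paths are built from the rescalings  rescale s M = {(s v, h) | (v, h) in M},  which vary
  continuously with s <> 0; Chabauty convergence is handled through the criterion chabauty_tendsto.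
  - Contraction: for A = {v | (v, c) in L for some c in K}, rescale s L tends to span A x L1
    as s -> 0+, so L is joined to span A x L1.
  - Expansion: a linear subspace V is the orthogonal complement of a finite orthonormal set E,
    and integer_points E = {x | x . e in Z for all e in E} spans R^k. Rescaled by s -> oo,
    integer_points E x L1 tends to V x L1; by contraction it is also joined to R^k x L1.
*)

section \<open>Closed subgroups\<close>

lemma is_subgroupI:
  "0 \<in> S \<Longrightarrow> (\<And>x y. x \<in> S \<Longrightarrow> y \<in> S \<Longrightarrow> x + y \<in> S) \<Longrightarrow> (\<And>x. x \<in> S \<Longrightarrow> - x \<in> S)
    \<Longrightarrow> is_subgroup S"
  unfolding is_subgroup_def by blast

lemma is_subgroupD:
  assumes "is_subgroup S"
  shows "0 \<in> S" "x \<in> S \<Longrightarrow> y \<in> S \<Longrightarrow> x + y \<in> S" "x \<in> S \<Longrightarrow> - x \<in> S"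
  using assms unfolding is_subgroup_def by blast+

lemma closed_subgroup_Times:
  "closed_subgroup A \<Longrightarrow> closed_subgroup B \<Longrightarrow> closed_subgroup (A \<times> B)"
  unfolding closed_subgroup_def is_subgroup_def
  by (auto simp: closed_Times zero_prod_def plus_prod_def uminus_prod_def)

lemma subspace_closed_subgroup:
  fixes V :: "'a::euclidean_space set"
  assumes "subspace V"
  shows "closed_subgroup V"
  unfolding closed_subgroup_def is_subgroup_def
  using assms closed_subspace subspace_0 subspace_add subspace_neg by blast

text \<open>The closure of a subgroup of a topological group is a subgroup: addition and
  negation are continuous and map the closure into the closure.\<close>
lemma is_subgroup_closure:
  fixes S :: "'h::topological_group_add set"
  assumes "is_subgroup S"
  shows "is_subgroup (closure S)"
proof (rule is_subgroupI)
  show "0 \<in> closure S"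
    using is_subgroupD(1)[OF assms] closure_subset by blast
  have "(\<lambda>p. fst p + snd p) ` (S \<times> S) \<subseteq> closure S"
    using is_subgroupD(2)[OF assms] closure_subset by fastforce
  then have "(\<lambda>p. fst p + snd p) ` closure (S \<times> S) \<subseteq> closure S"
    by (intro image_closure_subset continuous_intros) auto
  then show "x + y \<in> closure S" if "x \<in> closure S" "y \<in> closure S" for x y
    using that by (force simp: closure_Times)
  have "uminus ` S \<subseteq> closure S"
    using is_subgroupD(3)[OF assms] closure_subset by fastforce
  then have "uminus ` closure S \<subseteq> closure S"
    by (intro image_closure_subset continuous_intros) auto
  then show "- x \<in> closure S" if "x \<in> closure S" for x
    using that by blast
qed

lemma is_subgroup_snd_image:
  assumes "is_subgroup (L :: ('a::group_add \<times> 'h::group_add) set)"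
  shows "is_subgroup (snd ` L)"
  using is_subgroupD[OF assms]
  by (intro is_subgroupI) (force simp: image_iff snd_add[symmetric] snd_uminus[symmetric])+

lemma closed_subgroup_closure_snd:
  fixes L :: "('a::topological_group_add \<times> 'h::topological_group_add) set"
  assumes "closed_subgroup L"
  shows "closed_subgroup (closure (snd ` L))"
  using is_subgroup_closure[OF is_subgroup_snd_image] assms
  unfolding closed_subgroup_def by blast

lemma subgroup_int_scaleR:
  fixes S :: "'a::real_vector set"
  assumes "is_subgroup S" "a \<in> S"
  shows "of_int n *\<^sub>R a \<in> S"
proof -
  have nat: "of_nat m *\<^sub>R a \<in> S" for m
    by (induction m) (auto simp: is_subgroupD[OF assms(1)] assms(2) scaleR_add_left)
  show ?thesis
  proof (cases n rule: int_cases)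
    case (nonneg m)
    then show ?thesis using nat by simp
  next
    case (neg m)
    then have "of_int n *\<^sub>R a = - (of_nat (Suc m) *\<^sub>R a)"
      by (simp only: of_int_minus of_int_of_nat_eq scaleR_minus_left)
    then show ?thesis using is_subgroupD(3)[OF assms(1) nat[of "Suc m"]] by (simp only:)
  qed
qed

lemma subgroup_sum:
  assumes "is_subgroup S" "\<And>i. i \<in> I \<Longrightarrow> f i \<in> S"
  shows "sum f I \<in> S"
  using assms(2)
  by (induction I rule: infinite_finite_induct) (auto simp: is_subgroupD[OF assms(1)])

section \<open>Convergence in the Chabauty topology\<close>

definition chabauty_tendsto :: "('b \<Rightarrow> 'a::topological_space set) \<Rightarrow> 'a set \<Rightarrow> 'b filter \<Rightarrow> bool"
  where "chabauty_tendsto \<Gamma> M F \<longleftrightarrow>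
     (\<forall>y. y \<notin> M \<longrightarrow> (\<exists>Q. open Q \<and> y \<in> Q \<and> eventually (\<lambda>t. \<Gamma> t \<inter> Q = {}) F)) \<and>
     (\<forall>y\<in>M. \<forall>Q. open Q \<longrightarrow> y \<in> Q \<longrightarrow> eventually (\<lambda>t. \<Gamma> t \<inter> Q \<noteq> {}) F)"

lemma chabauty_tendstoI:
  assumes "\<And>y. y \<notin> M \<Longrightarrow> \<exists>Q. open Q \<and> y \<in> Q \<and> eventually (\<lambda>t. \<Gamma> t \<inter> Q = {}) F"
    and "\<And>y Q. y \<in> M \<Longrightarrow> open Q \<Longrightarrow> y \<in> Q \<Longrightarrow> eventually (\<lambda>t. \<Gamma> t \<inter> Q \<noteq> {}) F"
  shows "chabauty_tendsto \<Gamma> M F"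
  using assms unfolding chabauty_tendsto_def by blast

lemma chabauty_tendsto_cong:
  assumes "chabauty_tendsto \<Gamma> M F" "eventually (\<lambda>t. \<Gamma> t = \<Gamma>' t) F"
  shows "chabauty_tendsto \<Gamma>' M F"
proof -
  have "eventually (\<lambda>t. P (\<Gamma>' t)) F" if "eventually (\<lambda>t. P (\<Gamma> t)) F" for P
    using eventually_conj[OF that assms(2)] by (rule eventually_mono) auto
  then show ?thesis using assms(1) unfolding chabauty_tendsto_def by meson
qed

text \<open>By compactness, a limit disjoint from a compact set \<open>K\<close> forces \<open>\<Gamma> t\<close> to miss \<open>K\<close>
  eventually; this is what makes the subbasic sets \<open>{F. F \<inter> K = {}}\<close> behave.\<close>
lemma chabauty_tendsto_avoid_compact:
  assumes "chabauty_tendsto \<Gamma> M F" "compact K" "M \<inter> K = {}"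
  shows "eventually (\<lambda>t. \<Gamma> t \<inter> K = {}) F"
proof -
  obtain Q where Q: "\<And>y. y \<in> K \<Longrightarrow> open (Q y) \<and> y \<in> Q y \<and> eventually (\<lambda>t. \<Gamma> t \<inter> Q y = {}) F"
    using assms unfolding chabauty_tendsto_def by (metis disjoint_iff)
  obtain C where C: "C \<subseteq> K" "finite C" "K \<subseteq> (\<Union>c\<in>C. Q c)"
    using compactE_image[OF assms(2), of K Q] Q by blast
  have "eventually (\<lambda>t. \<forall>c\<in>C. \<Gamma> t \<inter> Q c = {}) F"
    using C Q by (intro eventually_ball_finite) auto
  then show ?thesis by (rule eventually_mono) (use C in blast)
qed

lemma openin_top_of_set_eventually:
  fixes P :: "'a::metric_space set"
  assumes "P \<subseteq> S" "\<And>t. t \<in> P \<Longrightarrow> eventually (\<lambda>s. s \<in> S \<longrightarrow> s \<in> P) (at t within S)"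
  shows "openin (top_of_set S) P"
  unfolding openin_euclidean_subtopology_iff
proof (intro conjI ballI assms(1))
  fix t assume "t \<in> P"
  then obtain d where "d > 0" "\<forall>x\<in>S. x \<noteq> t \<and> dist x t < d \<longrightarrow> x \<in> P"
    using assms(2) unfolding eventually_at by blast
  then show "\<exists>e>0. \<forall>x'\<in>S. dist x' t < e \<longrightarrow> x' \<in> P"
    using \<open>t \<in> P\<close> by metis
qed

lemma pathin_chabauty:
  fixes \<gamma> :: "real \<Rightarrow> 'a::{group_add,topological_space} set"
  assumes sub: "\<And>t. t \<in> {0..1} \<Longrightarrow> closed_subgroup (\<gamma> t)"
    and lim: "\<And>t. t \<in> {0..1} \<Longrightarrow> chabauty_tendsto \<gamma> (\<gamma> t) (at t within {0..1})"
  shows "pathin chabauty \<gamma>"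
proof -
  let ?S = "{{F::'a set. F \<inter> K = {}} | K. compact K} \<union> {{F::'a set. F \<inter> U \<noteq> {}} | U. open U}"
  have "continuous_map (top_of_set {0..1}) (topology_generated_by ?S) \<gamma>"
  proof (rule continuous_on_generated_topo)
    fix U assume "U \<in> ?S"
    then have ev: "eventually (\<lambda>s. \<gamma> s \<in> U) (at t within {0..1})" if "t \<in> {0..1}" "\<gamma> t \<in> U" for t
      using that chabauty_tendsto_avoid_compact[OF lim] lim
      unfolding chabauty_tendsto_def by auto
    show "openin (top_of_set {0..1}) (\<gamma> -` U \<inter> topspace (top_of_set {0..1}))"
    proof (rule openin_top_of_set_eventually)
      fix t assume "t \<in> \<gamma> -` U \<inter> topspace (top_of_set {0..1})"
      then have "eventually (\<lambda>s. \<gamma> s \<in> U) (at t within {0..1})" using ev by auto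
      then show "eventually (\<lambda>s. s \<in> {0..1} \<longrightarrow> s \<in> \<gamma> -` U \<inter> topspace (top_of_set {0..1}))
          (at t within {0..1})"
        by (rule eventually_mono) auto
    qed auto
  next
    have "UNIV \<in> ?S" by (rule UnI1) (auto intro!: exI[of _ "{}"])
    then show "\<gamma> ` topspace (top_of_set {0..1}) \<subseteq> \<Union> ?S" by blast
  qed
  then show ?thesis
    unfolding pathin_def chabauty_def
    by (rule continuous_map_into_subtopology) (use sub in auto)
qed

section \<open>Rescaling the vector coordinate\<close>

definition rescale :: "real \<Rightarrow> ('a::real_vector \<times> 'h) set \<Rightarrow> ('a \<times> 'h) set"
  where "rescale s M = (\<lambda>(v, h). (s *\<^sub>R v, h)) ` M"

lemma rescale_1 [simp]: "rescale 1 M = M"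
  unfolding rescale_def by (auto simp: image_def)

lemma rescale_memE:
  assumes "p \<in> rescale s M"
  obtains v h where "(v, h) \<in> M" "p = (s *\<^sub>R v, h)"
  using assms unfolding rescale_def by auto

lemma rescale_memI: "(v, h) \<in> M \<Longrightarrow> (s *\<^sub>R v, h) \<in> rescale s M"
  unfolding rescale_def by force

lemma rescale_eq_vimage:
  "s \<noteq> 0 \<Longrightarrow> rescale s M = (\<lambda>p. (inverse s *\<^sub>R fst p, snd p)) -` M"
  unfolding rescale_def by (force simp: image_def)

lemma rescale_closed_subgroup:
  fixes M :: "('a::real_normed_vector \<times> 'h::{group_add,topological_space}) set"
  assumes "s \<noteq> 0" "closed_subgroup M"
  shows "closed_subgroup (rescale s M)"
proof -
  have "closed M" and sg: "is_subgroup M"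
    using assms(2) unfolding closed_subgroup_def by auto
  then have "closed (rescale s M)"
    unfolding rescale_eq_vimage[OF assms(1)] by (intro closed_vimage continuous_intros)
  moreover have "is_subgroup (rescale s M)"
    unfolding rescale_eq_vimage[OF assms(1)] using is_subgroupD[OF sg]
    by (intro is_subgroupI) (auto simp: scaleR_add_right zero_prod_def)
  ultimately show ?thesis unfolding closed_subgroup_def by blast
qed

text \<open>A point \<open>y\<close> outside
  \<open>rescale s0 M\<close> is mapped outside the closed set \<open>M\<close> by \<open>(s, p) \<mapsto> (s\<inverse> fst p, snd p)\<close>, and by
  continuity of this map a whole product neighbourhood of \<open>(s0, y)\<close> is.\<close>
lemma rescale_tendsto:
  fixes M :: "('a::real_normed_vector \<times> 'h::topological_space) set"
  assumes "closed M" "s0 \<noteq> 0" "(g \<longlongrightarrow> s0) F"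
  shows "chabauty_tendsto (\<lambda>t. rescale (g t) M) (rescale s0 M) F"
proof (rule chabauty_tendstoI)
  fix y assume y: "y \<notin> rescale s0 M"
  define \<phi> :: "real \<times> 'a \<times> 'h \<Rightarrow> 'a \<times> 'h"
    where "\<phi> z = (inverse (fst z) *\<^sub>R fst (snd z), snd (snd z))" for z
  define D :: "(real \<times> 'a \<times> 'h) set" where "D = {s. s \<noteq> 0} \<times> UNIV"
  define N where "N = \<phi> -` (- M) \<inter> D"
  have "open {s::real. s \<noteq> 0}"
    using open_Compl[OF closed_singleton[of "0::real"]] by (simp add: Compl_eq)
  then have "open D"
    unfolding D_def by (intro open_Times open_UNIV)
  moreover have "continuous_on D \<phi>"
    unfolding \<phi>_def D_def by (intro continuous_intros) auto
  ultimately have open_N: "open N"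
    unfolding N_def using open_Compl[OF assms(1)]
    by (simp add: continuous_on_open_vimage)
  have "\<phi> (s0, y) \<notin> M"
  proof
    assume "\<phi> (s0, y) \<in> M"
    then have "y \<in> rescale s0 M"
      unfolding rescale_eq_vimage[OF assms(2)] \<phi>_def by simp
    with y show False ..
  qed
  then have "(s0, y) \<in> N"
    unfolding N_def D_def using assms(2) by simp
  with open_N obtain S Q where "open S" "open Q" "(s0, y) \<in> S \<times> Q" "S \<times> Q \<subseteq> N"
    by (rule open_prod_elim)
  then have SQ: "open S" "open Q" "s0 \<in> S" "y \<in> Q" "S \<times> Q \<subseteq> N"
    by auto
  have disjoint: "rescale s M \<inter> Q = {}" if "s \<in> S" for s
  proof -
    have "s \<noteq> 0"
      using SQ(4,5) \<open>s \<in> S\<close> unfolding N_def D_def by blast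
    have "p \<notin> rescale s M" if "p \<in> Q" for p
    proof
      assume "p \<in> rescale s M"
      then have "\<phi> (s, p) \<in> M"
        unfolding rescale_eq_vimage[OF \<open>s \<noteq> 0\<close>] \<phi>_def by simp
      moreover have "\<phi> (s, p) \<notin> M"
        using SQ(5) \<open>s \<in> S\<close> \<open>p \<in> Q\<close> unfolding N_def by blast
      ultimately show False by blast
    qed
    then show ?thesis by blast
  qed
  have "eventually (\<lambda>t. rescale (g t) M \<inter> Q = {}) F"
    using topological_tendstoD[OF assms(3) SQ(1,3)] by (rule eventually_mono) (rule disjoint)
  then show "\<exists>Q. open Q \<and> y \<in> Q \<and> eventually (\<lambda>t. rescale (g t) M \<inter> Q = {}) F"
    using SQ(2,4) by blast
next
  fix y Q assume y: "y \<in> rescale s0 M" and "open Q" "y \<in> Q"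
  obtain v h where vh: "(v, h) \<in> M" "y = (s0 *\<^sub>R v, h)"
    using y by (rule rescale_memE)
  have "((\<lambda>t. (g t *\<^sub>R v, h)) \<longlongrightarrow> (s0 *\<^sub>R v, h)) F"
    by (intro tendsto_intros assms(3))
  then have "eventually (\<lambda>t. (g t *\<^sub>R v, h) \<in> Q) F"
    using topological_tendstoD \<open>open Q\<close> \<open>y \<in> Q\<close> vh(2) by blast
  then show "eventually (\<lambda>t. rescale (g t) M \<inter> Q \<noteq> {}) F"
    by (rule eventually_mono) (use rescale_memI[OF vh(1)] in blast)
qed

text \<open>The second coordinate is untouched by rescaling, so points whose \<open>H\<close>-coordinate
  lies outside the closure of the projection are never approached.\<close>
lemma rescale_disjoint_off_closure_snd:
  "rescale s M \<inter> (UNIV \<times> - closure (snd ` M)) = {}"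
  using closure_subset[of "snd ` M"] unfolding rescale_def by force

section \<open>Contraction: the limit of \<open>rescale s L\<close> as \<open>s \<rightarrow> 0\<close>\<close>

text \<open>For a compact open
  subgroup \<open>K\<close> this subgroup \<open>A\<close> controls the contraction limit: it is \<open>span A \<times> L1\<close>.\<close>
definition vectors_over :: "'h set \<Rightarrow> ('a \<times> 'h) set \<Rightarrow> 'a set"
  where "vectors_over K L = {a. \<exists>c\<in>K. (a, c) \<in> L}"

lemma is_subgroup_vectors_over:
  fixes L :: "('a::group_add \<times> 'h::group_add) set"
  assumes "is_subgroup K" "is_subgroup L"
  shows "is_subgroup (vectors_over K L)"
proof (rule is_subgroupI)
  show "0 \<in> vectors_over K L"
    using is_subgroupD(1)[OF assms(1)] is_subgroupD(1)[OF assms(2)]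
    unfolding vectors_over_def by (auto simp: zero_prod_def)
next
  fix x y assume "x \<in> vectors_over K L" "y \<in> vectors_over K L"
  then obtain c d where "c \<in> K" "d \<in> K" "(x, c) \<in> L" "(y, d) \<in> L"
    unfolding vectors_over_def by blast
  then have "(x + y, c + d) \<in> L" "c + d \<in> K"
    using is_subgroupD(2)[OF assms(2)] is_subgroupD(2)[OF assms(1)] by fastforce+
  then show "x + y \<in> vectors_over K L"
    unfolding vectors_over_def by blast
next
  fix x assume "x \<in> vectors_over K L"
  then obtain c where "c \<in> K" "(x, c) \<in> L"
    unfolding vectors_over_def by blast
  then have "(- x, - c) \<in> L" "- c \<in> K"
    using is_subgroupD(3)[OF assms(2)] is_subgroupD(3)[OF assms(1)] by fastforce+
  then show "- x \<in> vectors_over K L"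
    unfolding vectors_over_def by blast
qed

lemma vectors_over_Times:
  "0 \<in> K \<Longrightarrow> 0 \<in> L1 \<Longrightarrow> vectors_over K (W \<times> L1) = W"
  unfolding vectors_over_def by auto

lemma add_nbhd:
  fixes h :: "'h::topological_group_add"
  assumes "open B" "h \<in> B"
  obtains U N where "open U" "open N" "h \<in> U" "0 \<in> N" "\<And>a b. a \<in> U \<Longrightarrow> b \<in> N \<Longrightarrow> a + b \<in> B"
proof -
  have "open ((\<lambda>p::'h \<times> 'h. fst p + snd p) -` B)"
    by (intro open_vimage assms(1) continuous_intros)
  moreover have "(h, 0) \<in> (\<lambda>p. fst p + snd p) -` B"
    using assms(2) by simp
  ultimately obtain U N where "open U" "open N" "(h, 0) \<in> U \<times> N"
      "U \<times> N \<subseteq> (\<lambda>p. fst p + snd p) -` B"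
    by (rule open_prod_elim)
  then show ?thesis using that by fastforce
qed

lemma diff_nbhd:
  fixes N :: "'h::topological_group_add set"
  assumes "open N" "0 \<in> N"
  obtains N' where "open N'" "0 \<in> N'" "\<And>a b. a \<in> N' \<Longrightarrow> b \<in> N' \<Longrightarrow> - a + b \<in> N"
proof -
  have "open ((\<lambda>p::'h \<times> 'h. - fst p + snd p) -` N)"
    by (intro open_vimage assms(1) continuous_intros)
  moreover have "(0, 0) \<in> (\<lambda>p::'h \<times> 'h. - fst p + snd p) -` N"
    using assms(2) by simp
  ultimately obtain C1 C2 where C: "open C1" "open C2" "(0, 0) \<in> C1 \<times> C2"
      "C1 \<times> C2 \<subseteq> (\<lambda>p. - fst p + snd p) -` N"
    by (rule open_prod_elim)
  show ?thesis
    by (rule that[of "C1 \<inter> C2"]) (use C in auto)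
qed

text \<open>Compactness of \<open>K\<close> lets us move any element \<open>(a, c)\<close> of \<open>L\<close> with \<open>c \<in> K\<close> into an
  arbitrary neighbourhood \<open>N\<close> of \<open>0\<close> in the \<open>H\<close>-coordinate, changing the vector coordinate
  by a uniformly bounded amount: subtract one of finitely many fixed elements of \<open>L\<close>.\<close>
lemma bounded_correction:
  fixes L :: "('a::real_normed_vector \<times> 'h::topological_group_add) set"
  assumes L: "is_subgroup L" and "compact K" "open N" "0 \<in> N"
  obtains C where
    "\<And>a c. c \<in> K \<Longrightarrow> (a, c) \<in> L \<Longrightarrow> \<exists>a' w. (a', w) \<in> L \<and> w \<in> N \<and> norm (a - a') \<le> C"
proof -
  obtain N' where N': "open N'" "0 \<in> N'" "\<And>a b. a \<in> N' \<Longrightarrow> b \<in> N' \<Longrightarrow> - a + b \<in> N"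
    using diff_nbhd[OF assms(3,4)] by blast
  have "open ((\<lambda>z. - k + z) -` N')" for k
    by (intro open_vimage N'(1) continuous_intros)
  moreover have "K \<subseteq> (\<Union>k\<in>K. (\<lambda>z. - k + z) -` N')"
  proof
    fix z assume "z \<in> K"
    moreover have "z \<in> (\<lambda>z'. - z + z') -` N'"
      using N'(2) by simp
    ultimately show "z \<in> (\<Union>k\<in>K. (\<lambda>z. - k + z) -` N')" by blast
  qed
  ultimately obtain T where T: "T \<subseteq> K" "finite T" "K \<subseteq> (\<Union>k\<in>T. (\<lambda>z. - k + z) -` N')"
    by (rule compactE_image[OF \<open>compact K\<close>])
  define p where "p k = (SOME q. q \<in> L \<and> - k + snd q \<in> N')" for k
  have "\<exists>a' w. (a', w) \<in> L \<and> w \<in> N \<and> norm (a - a') \<le> (\<Sum>k\<in>T. norm (fst (p k)))"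
    if "c \<in> K" "(a, c) \<in> L" for a c
  proof -
    obtain k where k: "k \<in> T" "- k + c \<in> N'"
      using T(3) \<open>c \<in> K\<close> by blast
    then have "(a, c) \<in> L \<and> - k + snd (a, c) \<in> N'"
      using \<open>(a, c) \<in> L\<close> by simp
    then have "p k \<in> L \<and> - k + snd (p k) \<in> N'"
      unfolding p_def by (rule someI)
    moreover obtain b c' where bc: "p k = (b, c')"
      by (cases "p k")
    ultimately have "(b, c') \<in> L" "- k + c' \<in> N'"
      by simp_all
    have "- (b, c') + (a, c) \<in> L"
      using is_subgroupD(2)[OF L is_subgroupD(3)[OF L \<open>(b, c') \<in> L\<close>] \<open>(a, c) \<in> L\<close>] .
    moreover have "- c' + c \<in> N"
      using N'(3)[OF \<open>- k + c' \<in> N'\<close> k(2)] by (simp add: minus_add add.assoc)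
    moreover have "norm b \<le> (\<Sum>k\<in>T. norm (fst (p k)))"
      using member_le_sum[of k T "\<lambda>k. norm (fst (p k))"] k(1) T(2) bc by simp
    ultimately show ?thesis
      by (intro exI[of _ "- b + a"] exI[of _ "- c' + c"]) simp
  qed
  then show ?thesis by (rule that)
qed

lemma floor_multiple_approx:
  fixes s u :: real
  assumes "s > 0"
  shows "\<bar>s * of_int \<lfloor>u / s\<rfloor> - u\<bar> \<le> s"
proof -
  have "of_int \<lfloor>u / s\<rfloor> \<le> u / s" "u / s < of_int \<lfloor>u / s\<rfloor> + 1"
    by linarith+
  then have "s * of_int \<lfloor>u / s\<rfloor> \<le> s * (u / s)" "s * (u / s) < s * (of_int \<lfloor>u / s\<rfloor> + 1)"
    using assms by (intro mult_left_mono mult_strict_left_mono; simp)+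
  then have "s * of_int \<lfloor>u / s\<rfloor> \<le> u" "u < s * of_int \<lfloor>u / s\<rfloor> + s"
    using assms by (simp_all add: algebra_simps)
  then show ?thesis by linarith
qed

text \<open>A vector in the span of a subgroup \<open>A\<close> is approximated by \<open>s a\<close>, \<open>a \<in> A\<close>, with an
  error proportional to \<open>s\<close>: round its coordinates to integer multiples of \<open>s\<close>.\<close>
lemma span_approx_by_multiples:
  fixes A :: "'a::real_normed_vector set"
  assumes A: "is_subgroup A" and "x \<in> span A"
  obtains D where "\<And>s. s > 0 \<Longrightarrow> \<exists>a\<in>A. norm (s *\<^sub>R a - x) \<le> s * D"
proof -
  obtain S u where S: "finite S" "S \<subseteq> A" "x = (\<Sum>a\<in>S. u a *\<^sub>R a)"
    using \<open>x \<in> span A\<close> unfolding span_explicit by blast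
  have "\<exists>a\<in>A. norm (s *\<^sub>R a - x) \<le> s * (\<Sum>a\<in>S. norm a)" if "s > 0" for s
  proof
    let ?a = "\<Sum>a\<in>S. of_int \<lfloor>u a / s\<rfloor> *\<^sub>R a"
    show "?a \<in> A"
      using S(2) by (intro subgroup_sum[OF A] subgroup_int_scaleR[OF A]) auto
    have "s *\<^sub>R ?a - x = (\<Sum>a\<in>S. (s * of_int \<lfloor>u a / s\<rfloor> - u a) *\<^sub>R a)"
      by (simp add: S(3) scaleR_sum_right sum_subtractf scaleR_diff_left)
    also have "norm \<dots> \<le> (\<Sum>a\<in>S. \<bar>s * of_int \<lfloor>u a / s\<rfloor> - u a\<bar> * norm a)"
      using norm_sum[of "\<lambda>a. (s * of_int \<lfloor>u a / s\<rfloor> - u a) *\<^sub>R a" S] by simp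
    also have "\<dots> \<le> (\<Sum>a\<in>S. s * norm a)"
      using floor_multiple_approx[OF that] by (intro sum_mono mult_right_mono) auto
    finally show "norm (s *\<^sub>R ?a - x) \<le> s * (\<Sum>a\<in>S. norm a)"
      by (simp add: sum_distrib_left)
  qed
  then show ?thesis by (rule that)
qed

text \<open>Start from \<open>(v', h') \<in> L\<close> with \<open>h'\<close> near \<open>h\<close>, add an element \<open>(a, c)\<close>, \<open>c \<in> K\<close>,
  with \<open>s a \<approx> x\<close>, and correct \<open>c\<close> into a small neighbourhood of \<open>0\<close>; the vector coordinate
  of the result, scaled by \<open>s\<close>, differs from \<open>x\<close> by \<open>O(s)\<close>.\<close>
lemma contraction_lower:
  fixes L :: "('a::real_normed_vector \<times> 'h::topological_group_add) set"
  assumes L: "is_subgroup L" and K: "compact K" "is_subgroup K"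
    and g: "(g \<longlongrightarrow> 0) F" "eventually (\<lambda>t. g t > 0) F"
    and x: "x \<in> span (vectors_over K L)" and h: "h \<in> closure (snd ` L)"
    and Q: "open Q" "(x, h) \<in> Q"
  shows "eventually (\<lambda>t. rescale (g t) L \<inter> Q \<noteq> {}) F"
proof -
  obtain X B where XB: "open X" "open B" "(x, h) \<in> X \<times> B" "X \<times> B \<subseteq> Q"
    using open_prod_elim[OF Q] by metis
  obtain r where r: "r > 0" "ball x r \<subseteq> X"
    using XB(1,3) open_contains_ball by blast
  obtain U N where UN: "open U" "open N" "h \<in> U" "0 \<in> N" "\<And>a b. a \<in> U \<Longrightarrow> b \<in> N \<Longrightarrow> a + b \<in> B"
    using add_nbhd[OF XB(2)] XB(3) by blast
  have "U \<inter> snd ` L \<noteq> {}"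
    using h UN(1,3) open_Int_closure_eq_empty[of U "snd ` L"] by blast
  then obtain v' h' where v'h': "(v', h') \<in> L" "h' \<in> U"
    by force
  obtain C where C: "\<And>a c. c \<in> K \<Longrightarrow> (a, c) \<in> L \<Longrightarrow> \<exists>a' w. (a', w) \<in> L \<and> w \<in> N \<and> norm (a - a') \<le> C"
    using bounded_correction[OF L K(1) UN(2,4)] by blast
  obtain D where D: "\<And>s. s > 0 \<Longrightarrow> \<exists>a\<in>vectors_over K L. norm (s *\<^sub>R a - x) \<le> s * D"
    using span_approx_by_multiples[OF is_subgroup_vectors_over[OF K(2) L] x] by blast
  have "((\<lambda>t. g t * (norm v' + C + D)) \<longlongrightarrow> 0) F"
    by (rule tendsto_mult_left_zero[OF g(1)])
  then have "eventually (\<lambda>t. g t * (norm v' + C + D) < r) F"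
    using r(1) by (auto dest: order_tendstoD(2))
  with g(2) show ?thesis
  proof (rule eventually_elim2)
    fix t assume s: "g t > 0" and small: "g t * (norm v' + C + D) < r"
    define s where "s = g t"
    obtain a where "a \<in> vectors_over K L" and a: "norm (s *\<^sub>R a - x) \<le> s * D"
      using D s unfolding s_def by blast
    then obtain c where "c \<in> K" "(a, c) \<in> L"
      unfolding vectors_over_def by blast
    then obtain a' w where a'w: "(a', w) \<in> L" "w \<in> N" "norm (a - a') \<le> C"
      using C by blast
    have "(v', h') + (a', w) \<in> L"
      using is_subgroupD(2)[OF L v'h'(1) a'w(1)] .
    then have "(s *\<^sub>R (v' + a'), h' + w) \<in> rescale s L"
      by (simp add: rescale_memI)
    have "norm (s *\<^sub>R (v' + a') - x) = norm (s *\<^sub>R v' + s *\<^sub>R (a' - a) + (s *\<^sub>R a - x))"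
      by (simp add: algebra_simps)
    also have "\<dots> \<le> norm (s *\<^sub>R v') + norm (s *\<^sub>R (a' - a)) + norm (s *\<^sub>R a - x)"
      by (intro norm_triangle_le add_right_mono norm_triangle_ineq)
    also have "\<dots> \<le> s * norm v' + s * C + s * D"
      using s a a'w(3) unfolding s_def
      by (intro add_mono) (auto simp: norm_minus_commute intro: mult_left_mono)
    also have "\<dots> < r"
      using small unfolding s_def by (simp add: algebra_simps)
    finally have "s *\<^sub>R (v' + a') \<in> X"
      using r(2) by (auto simp: dist_norm norm_minus_commute)
    moreover have "h' + w \<in> B"
      using UN(5) v'h'(2) a'w(2) .
    ultimately have "(s *\<^sub>R (v' + a'), h' + w) \<in> Q"
      using XB(4) by blast
    with \<open>(s *\<^sub>R (v' + a'), h' + w) \<in> rescale s L\<close> show "rescale (g t) L \<inter> Q \<noteq> {}"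
      unfolding s_def by blast
  qed
qed

text \<open>Fix
  \<open>(v0, h0) \<in> L\<close> with \<open>h0 \<in> h + K\<close>. Any \<open>(v, h') \<in> L\<close> with \<open>h' \<in> h + K\<close> has \<open>v - v0 \<in> A\<close>,
  so \<open>s v\<close> lies within \<open>s \<parallel>v0\<parallel>\<close> of \<open>span A\<close> and stays away from \<open>x\<close> once \<open>s\<close> is small.\<close>
lemma contraction_upper:
  fixes L :: "('a::euclidean_space \<times> 'h::topological_group_add) set"
  assumes L: "is_subgroup L" and K: "open K" "is_subgroup K" and g: "(g \<longlongrightarrow> 0) F"
    and x: "x \<notin> span (vectors_over K L)" and h: "h \<in> closure (snd ` L)"
  obtains Q where "open Q" "(x, h) \<in> Q" "eventually (\<lambda>t. rescale (g t) L \<inter> Q = {}) F"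
proof -
  define A where "A = vectors_over K L"
  define Kh where "Kh = (\<lambda>z. - h + z) -` K"
  have "open Kh"
    unfolding Kh_def by (intro open_vimage K(1) continuous_intros)
  moreover have "h \<in> Kh"
    unfolding Kh_def using is_subgroupD(1)[OF K(2)] by simp
  ultimately have "Kh \<inter> snd ` L \<noteq> {}"
    using h open_Int_closure_eq_empty[of Kh "snd ` L"] by blast
  then obtain v0 h0 where v0h0: "(v0, h0) \<in> L" "- h + h0 \<in> K"
    unfolding Kh_def by force
  define \<delta> where "\<delta> = infdist x (span A)"
  have "\<delta> > 0"
    unfolding \<delta>_def using x span_zero[of A]
    by (intro infdist_pos_not_in_closed) (auto simp: A_def closed_subspace)
  define Q where "Q = ball x (\<delta> / 2) \<times> Kh"
  have "((\<lambda>t. g t *\<^sub>R v0) \<longlongrightarrow> 0) F"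
    using tendsto_scaleR[OF g tendsto_const[of v0]] by simp
  then have "eventually (\<lambda>t. norm (g t *\<^sub>R v0) < \<delta> / 2) F"
    using \<open>\<delta> > 0\<close> by (auto dest: tendstoD[where e = "\<delta> / 2"])
  then have "eventually (\<lambda>t. rescale (g t) L \<inter> Q = {}) F"
  proof (rule eventually_mono)
    fix t assume small: "norm (g t *\<^sub>R v0) < \<delta> / 2"
    show "rescale (g t) L \<inter> Q = {}"
    proof (rule equals0I)
      fix p assume "p \<in> rescale (g t) L \<inter> Q"
      then obtain v h' where vh': "(v, h') \<in> L" "p = (g t *\<^sub>R v, h')" "p \<in> Q"
        by (auto elim: rescale_memE)
      then have near: "dist x (g t *\<^sub>R v) < \<delta> / 2" and "- h + h' \<in> K"
        unfolding Q_def Kh_def by auto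
      have "- (v0, h0) + (v, h') \<in> L"
        using is_subgroupD(2)[OF L is_subgroupD(3)[OF L v0h0(1)] vh'(1)] .
      moreover have "- h0 + h' = - (- h + h0) + (- h + h')"
        by (simp add: minus_add add.assoc)
      then have "- h0 + h' \<in> K"
        using is_subgroupD(2)[OF K(2) is_subgroupD(3)[OF K(2) v0h0(2)] \<open>- h + h' \<in> K\<close>] by simp
      ultimately have "- v0 + v \<in> A"
        unfolding A_def vectors_over_def by auto
      then have "g t *\<^sub>R (- v0 + v) \<in> span A"
        by (intro span_mul span_base)
      then have "\<delta> \<le> dist x (g t *\<^sub>R (- v0 + v))"
        unfolding \<delta>_def by (rule infdist_le)
      also have "\<dots> \<le> dist x (g t *\<^sub>R v) + norm (g t *\<^sub>R v0)"
        using dist_triangle_le[of x "g t *\<^sub>R v" "g t *\<^sub>R (- v0 + v)" "dist x (g t *\<^sub>R v) + norm (g t *\<^sub>R v0)"]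
        by (simp add: dist_norm algebra_simps)
      finally show False
        using near small by simp
    qed
  qed
  moreover have "open Q" "(x, h) \<in> Q"
    unfolding Q_def using \<open>open Kh\<close> \<open>h \<in> Kh\<close> \<open>\<delta> > 0\<close> by (auto intro: open_Times)
  ultimately show ?thesis using that by blast
qed

lemma contraction_tendsto:
  fixes L :: "('a::euclidean_space \<times> 'h::topological_group_add) set"
  assumes L: "is_subgroup L" and K: "compact K" "open K" "is_subgroup K"
    and g: "(g \<longlongrightarrow> 0) F" "eventually (\<lambda>t. g t > 0) F"
  shows "chabauty_tendsto (\<lambda>t. rescale (g t) L) (span (vectors_over K L) \<times> closure (snd ` L)) F"
proof (rule chabauty_tendstoI)
  fix y assume y: "y \<notin> span (vectors_over K L) \<times> closure (snd ` L)"
  obtain x h where xh: "y = (x, h)"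
    by (cases y)
  show "\<exists>Q. open Q \<and> y \<in> Q \<and> eventually (\<lambda>t. rescale (g t) L \<inter> Q = {}) F"
  proof (cases "h \<in> closure (snd ` L)")
    case True
    then have "x \<notin> span (vectors_over K L)"
      using y xh by simp
    from contraction_upper[OF L K(2,3) g(1) this True] show ?thesis
      unfolding xh by blast
  next
    case False
    then show ?thesis
      using rescale_disjoint_off_closure_snd[of _ L] xh
      by (intro exI[of _ "UNIV \<times> - closure (snd ` L)"]) (auto intro: open_Times)
  qed
next
  fix y Q assume "y \<in> span (vectors_over K L) \<times> closure (snd ` L)" "open Q" "y \<in> Q"
  then show "eventually (\<lambda>t. rescale (g t) L \<inter> Q \<noteq> {}) F"
    using contraction_lower[OF L K(1,3) g] by (cases y) auto
qed

section \<open>Paths obtained by rescaling\<close>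

lemma path_by_rescaling:
  fixes M M0 :: "('a::real_normed_vector \<times> 'h::{group_add,topological_space}) set"
    and g :: "real \<Rightarrow> real"
  assumes M: "closed_subgroup M" and M0: "closed_subgroup M0"
    and g_nz: "\<And>t. t \<in> {0<..1} \<Longrightarrow> g t \<noteq> 0"
    and g_cont: "\<And>t. t \<in> {0<..1} \<Longrightarrow> (g \<longlongrightarrow> g t) (at t within {0..1})"
    and g1: "g 1 = 1"
    and lim0: "chabauty_tendsto (\<lambda>t. rescale (g t) M) M0 (at 0 within {0..1})"
  shows "path_component_of chabauty M0 M"
proof -
  define \<gamma> where "\<gamma> = (\<lambda>t. if t = 0 then M0 else rescale (g t) M)"
  have ev: "eventually (\<lambda>s. rescale (g s) M = \<gamma> s) (at t within {0..1})" for t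
    using eventually_neq_at_within[of 0 t] by (rule eventually_mono) (simp add: \<gamma>_def)
  have "pathin chabauty \<gamma>"
  proof (rule pathin_chabauty)
    fix t :: real assume t: "t \<in> {0..1}"
    show "closed_subgroup (\<gamma> t)"
      using t M0 rescale_closed_subgroup[OF g_nz M] by (simp add: \<gamma>_def)
    show "chabauty_tendsto \<gamma> (\<gamma> t) (at t within {0..1})"
    proof (cases "t = 0")
      case True
      then show ?thesis
        using chabauty_tendsto_cong[OF lim0 ev] by (simp add: \<gamma>_def)
    next
      case False
      then have "t \<in> {0<..1}"
        using t by simp
      with M have "chabauty_tendsto (\<lambda>s. rescale (g s) M) (rescale (g t) M) (at t within {0..1})"
        unfolding closed_subgroup_def using rescale_tendsto g_nz g_cont by blast
      then show ?thesis
        using chabauty_tendsto_cong[OF _ ev] False by (simp add: \<gamma>_def)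
    qed
  qed
  then show ?thesis
    unfolding path_component_of_def using g1 by (auto simp: \<gamma>_def)
qed

lemma path_component_span_vectors_over:
  fixes L :: "('a::euclidean_space \<times> 'h::topological_group_add) set"
  assumes L: "closed_subgroup L" and K: "compact K" "open K" "is_subgroup K"
  shows "path_component_of chabauty L (span (vectors_over K L) \<times> closure (snd ` L))"
proof (rule path_component_of_sym, rule path_by_rescaling[where g = "\<lambda>t. t"])
  have "is_subgroup L" "is_subgroup K"
    using L K(3) unfolding closed_subgroup_def by auto
  then show "closed_subgroup (span (vectors_over K L) \<times> closure (snd ` L))"
    using L by (intro closed_subgroup_Times subspace_closed_subgroup subspace_span
        closed_subgroup_closure_snd)
  have "eventually (\<lambda>t::real. t > 0) (at 0 within {0..1})"
    by (simp add: at_within_Icc_at_right eventually_at_right_less)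
  then show "chabauty_tendsto (\<lambda>t. rescale t L) (span (vectors_over K L) \<times> closure (snd ` L))
      (at 0 within {0..1})"
    using L K unfolding closed_subgroup_def
    by (intro contraction_tendsto tendsto_ident_at) auto
qed (use L in \<open>auto intro: tendsto_ident_at\<close>)

section \<open>Expansion: the limit of rescaled "lattices" as \<open>s \<rightarrow> \<infinity>\<close>\<close>

text \<open>The closed subgroup of vectors having integer inner product with every \<open>e \<in> E\<close>.
  It contains the orthogonal complement of \<open>E\<close>, and expanding it kills everything else.\<close>
definition integer_points :: "'a::real_inner set \<Rightarrow> 'a set"
  where "integer_points E = {x. \<forall>e\<in>E. x \<bullet> e \<in> \<int>}"

lemma closed_subgroup_integer_points:
  fixes E :: "'a::real_inner set"
  shows "closed_subgroup (integer_points E)"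
  unfolding closed_subgroup_def
proof
  have "integer_points E = (\<Inter>e\<in>E. (\<lambda>x. x \<bullet> e) -` \<int>)"
    unfolding integer_points_def by auto
  then show "closed (integer_points E)"
    by (simp add: closed_INT closed_vimage closed_Ints continuous_on_inner continuous_on_id
        continuous_on_const)
  show "is_subgroup (integer_points E)"
    unfolding integer_points_def
    by (rule is_subgroupI) (simp_all add: inner_add_left inner_minus_left)
qed

lemma orthogonal_comp_subset_integer_points: "orthogonal_comp E \<subseteq> integer_points E"
  unfolding orthogonal_comp_def integer_points_def orthogonal_def
  by (auto simp: inner_commute)

lemma integer_multiple_far:
  fixes c s n :: real
  assumes "n \<in> \<int>" "2 * \<bar>c\<bar> \<le> s"
  shows "\<bar>c\<bar> \<le> \<bar>s * n - c\<bar>"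
proof (cases "n = 0")
  case False
  then have "1 \<le> \<bar>n\<bar>"
    using Ints_nonzero_abs_ge1[OF assms(1)] by simp
  moreover have "0 \<le> s"
    using assms(2) by linarith
  ultimately have "s * 1 \<le> s * \<bar>n\<bar>"
    by (rule mult_left_mono)
  then have "s \<le> \<bar>s * n\<bar>"
    using \<open>0 \<le> s\<close> by (simp add: abs_mult)
  then show ?thesis
    using assms(2) by linarith
qed simp

lemma expansion_tendsto:
  fixes E :: "'a::euclidean_space set" and L1 :: "'h::topological_space set"
  assumes "closed L1" and g: "filterlim g at_top F"
  shows "chabauty_tendsto (\<lambda>t. rescale (g t) (integer_points E \<times> L1)) (orthogonal_comp E \<times> L1) F"
proof (rule chabauty_tendstoI)
  fix y assume y: "y \<notin> orthogonal_comp E \<times> L1"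
  obtain x h where xh: "y = (x, h)"
    by (cases y)
  show "\<exists>Q. open Q \<and> y \<in> Q \<and> eventually (\<lambda>t. rescale (g t) (integer_points E \<times> L1) \<inter> Q = {}) F"
  proof (cases "h \<in> L1")
    case False
    have "rescale s (integer_points E \<times> L1) \<inter> (UNIV \<times> - L1) = {}" for s
      by (auto elim: rescale_memE)
    then show ?thesis
      using False xh \<open>closed L1\<close>
      by (intro exI[of _ "UNIV \<times> - L1"]) (auto intro: open_Times)
  next
    case True
    then obtain e where e: "e \<in> E" "e \<bullet> x \<noteq> 0"
      using y xh unfolding orthogonal_comp_def orthogonal_def by auto
    define c where "c = e \<bullet> x"
    define Q where "Q = {z. \<bar>z \<bullet> e - c\<bar> < \<bar>c\<bar> / 2} \<times> (UNIV :: 'h set)"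
    have "open Q"
      unfolding Q_def by (intro open_Times open_UNIV open_Collect_less continuous_intros)
    moreover have "y \<in> Q"
      unfolding Q_def xh c_def using e(2) by (simp add: inner_commute)
    moreover have "eventually (\<lambda>t. 2 * \<bar>c\<bar> \<le> g t) F"
      using g unfolding filterlim_at_top by blast
    then have "eventually (\<lambda>t. rescale (g t) (integer_points E \<times> L1) \<inter> Q = {}) F"
    proof (rule eventually_mono)
      fix t assume large: "2 * \<bar>c\<bar> \<le> g t"
      show "rescale (g t) (integer_points E \<times> L1) \<inter> Q = {}"
      proof (rule equals0I)
        fix p assume "p \<in> rescale (g t) (integer_points E \<times> L1) \<inter> Q"
        then obtain v h' where "v \<in> integer_points E" "(g t *\<^sub>R v, h') \<in> Q"
          by (auto elim: rescale_memE)
        then have "v \<bullet> e \<in> \<int>" "\<bar>g t * (v \<bullet> e) - c\<bar> < \<bar>c\<bar> / 2"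
          using e(1) unfolding integer_points_def Q_def by auto
        moreover have "\<bar>c\<bar> > 0"
          using e(2) unfolding c_def by simp
        ultimately show False
          using integer_multiple_far[OF _ large, of "v \<bullet> e"] by linarith
      qed
    qed
    ultimately show ?thesis by blast
  qed
next
  fix y Q assume y: "y \<in> orthogonal_comp E \<times> L1" and "open Q" "y \<in> Q"
  have "eventually (\<lambda>t. 1 \<le> g t) F"
    using g unfolding filterlim_at_top by blast
  then show "eventually (\<lambda>t. rescale (g t) (integer_points E \<times> L1) \<inter> Q \<noteq> {}) F"
  proof (rule eventually_mono)
    fix t assume "1 \<le> g t"
    obtain x h where xh: "y = (x, h)"
      by (cases y)
    have "inverse (g t) *\<^sub>R x \<in> orthogonal_comp E"
      using y xh by (simp add: orthogonal_comp_def orthogonal_clauses)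
    then have "(g t *\<^sub>R (inverse (g t) *\<^sub>R x), h) \<in> rescale (g t) (integer_points E \<times> L1)"
      using y xh orthogonal_comp_subset_integer_points by (intro rescale_memI) auto
    then have "y \<in> rescale (g t) (integer_points E \<times> L1)"
      using \<open>1 \<le> g t\<close> xh by simp
    then show "rescale (g t) (integer_points E \<times> L1) \<inter> Q \<noteq> {}"
      using \<open>y \<in> Q\<close> by blast
  qed
qed

text \<open>Every linear subspace \<open>V\<close> is the orthogonal complement of an orthonormal basis \<open>B\<close> of
  \<open>V\<^sup>\<bottom>\<close>, and \<open>integer_points B \<supseteq> V \<union> B\<close> spans the whole space because \<open>V + V\<^sup>\<bottom>\<close> does.\<close>
lemma subspace_as_orthogonal_comp:
  fixes V :: "'a::euclidean_space set"
  assumes V: "subspace V"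
  obtains E where "V = orthogonal_comp E" "span (integer_points E) = UNIV"
proof -
  obtain B where B: "B \<subseteq> orthogonal_comp V" "pairwise orthogonal B" "\<And>b. b \<in> B \<Longrightarrow> norm b = 1"
      "span B = orthogonal_comp V"
    using orthonormal_basis_subspace[OF subspace_orthogonal_comp] by metis
  have "orthogonal_comp (span B) = orthogonal_comp B"
  proof
    show "orthogonal_comp (span B) \<subseteq> orthogonal_comp B"
      by (rule orthogonal_comp_anti_mono[OF span_superset])
    show "orthogonal_comp B \<subseteq> orthogonal_comp (span B)"
      unfolding orthogonal_comp_def
      by (auto intro: orthogonal_to_span simp: orthogonal_commute)
  qed
  then have V_eq: "V = orthogonal_comp B"
    using orthogonal_comp_self[OF V] B(4) by simp
  have "B \<subseteq> integer_points B"
  proof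
    fix b assume "b \<in> B"
    have "b \<bullet> e \<in> \<int>" if "e \<in> B" for e
    proof (cases "b = e")
      case True
      then show ?thesis
        using B(3)[OF \<open>b \<in> B\<close>] by (metis norm_eq_1 Ints_1)
    next
      case False
      then show ?thesis
        using B(2) \<open>b \<in> B\<close> that unfolding pairwise_def orthogonal_def by auto
    qed
    then show "b \<in> integer_points B"
      unfolding integer_points_def by blast
  qed
  then have "orthogonal_comp V \<subseteq> span (integer_points B)"
    using B(4) span_mono by blast
  moreover have "V \<subseteq> span (integer_points B)"
    using V_eq orthogonal_comp_subset_integer_points span_superset by blast
  ultimately have "V + orthogonal_comp V \<subseteq> span (integer_points B)"
    by (intro subspace_sum_minimal subspace_span)
  then have "span (integer_points B) = UNIV"
    using subspace_sum_orthogonal_comp[OF V] by blast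
  with V_eq show ?thesis by (rule that)
qed

section \<open>The path component of a closed subgroup\<close>

text \<open>Expansion step: \<open>V \<times> L1\<close> is joined to \<open>UNIV \<times> L1\<close> for any linear subspace \<open>V\<close>,
  via the closed subgroup \<open>integer_points E \<times> L1\<close>, which expands to \<open>V \<times> L1\<close> and contracts
  to \<open>UNIV \<times> L1\<close>.\<close>
lemma path_component_subspace_UNIV:
  fixes V :: "'a::euclidean_space set" and L1 K :: "'h::topological_group_add set"
  assumes V: "subspace V" and L1: "closed_subgroup L1"
    and K: "compact K" "open K" "is_subgroup K"
  shows "path_component_of chabauty (V \<times> L1) (UNIV \<times> L1)"
proof -
  obtain E where E: "V = orthogonal_comp E" "span (integer_points E) = UNIV"
    using subspace_as_orthogonal_comp[OF V] by blast
  define G where "G = integer_points E \<times> L1"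
  have G: "closed_subgroup G"
    unfolding G_def using closed_subgroup_integer_points L1 by (rule closed_subgroup_Times)
  have "closed L1" "0 \<in> L1"
    using L1 unfolding closed_subgroup_def is_subgroup_def by auto
  have "filterlim inverse at_top (at (0::real) within {0..1})"
    by (simp add: at_within_Icc_at_right filterlim_inverse_at_top_right)
  then have "chabauty_tendsto (\<lambda>t. rescale (inverse t) G) (V \<times> L1) (at 0 within {0..1})"
    unfolding G_def E(1) using \<open>closed L1\<close> by (rule expansion_tendsto[rotated])
  then have expand: "path_component_of chabauty (V \<times> L1) G"
    using G V L1
    by (intro path_by_rescaling[where g = inverse])
      (auto intro!: tendsto_inverse tendsto_ident_at closed_subgroup_Times subspace_closed_subgroup)
  have "vectors_over K G = integer_points E"
    unfolding G_def by (rule vectors_over_Times[OF is_subgroupD(1)[OF K(3)] \<open>0 \<in> L1\<close>])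
  moreover have "0 \<in> integer_points E"
    unfolding integer_points_def by simp
  then have "closure (snd ` G) = L1"
    unfolding G_def using \<open>closed L1\<close> by auto
  ultimately have contract: "path_component_of chabauty G (UNIV \<times> L1)"
    using path_component_span_vectors_over[OF G K] E(2) by simp
  from expand contract show ?thesis
    by (rule path_component_of_trans)
qed

lemma path_component_UNIV_Times:
  fixes M :: "('a::euclidean_space \<times> 'h::topological_group_add) set" and K :: "'h set"
  assumes M: "closed_subgroup M" and K: "compact K" "open K" "is_subgroup K"
  shows "path_component_of chabauty M (UNIV \<times> closure (snd ` M))"
  using path_component_span_vectors_over[OF M K]
    path_component_subspace_UNIV[OF subspace_span closed_subgroup_closure_snd[OF M] K]
  by (rule path_component_of_trans)

theorem proposition7p2:
  fixes L :: "((real ^ 'k) \<times> 'h::{topological_group_add, t2_space}) set"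
  assumes "locally_compact_space (euclidean :: 'h topology)"
    and "\<exists>K :: 'h set. compact K \<and> open K \<and> is_subgroup K"
    and "closed_subgroup L"
  shows "(\<forall>W :: (real ^ 'k) set. closed_subgroup W \<longrightarrow>
            path_component_of chabauty L (W \<times> closure (snd ` L)))
       \<and> path_component_of_set chabauty L \<noteq> {L}"
proof -
  obtain K :: "'h set" where K: "compact K" "open K" "is_subgroup K"
    using assms(2) by blast
  define L1 where "L1 = closure (snd ` L)"
  have L1: "closed_subgroup L1" "0 \<in> L1"
    unfolding L1_def using closed_subgroup_closure_snd[OF assms(3)]
    by (auto simp: closed_subgroup_def is_subgroup_def)
  have joined: "path_component_of chabauty L (W \<times> L1)" if W: "closed_subgroup W" for W
  proof -
    have "closure (snd ` (W \<times> L1)) = L1"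
      using W L1 by (auto simp: closed_subgroup_def is_subgroup_def)
    then have "path_component_of chabauty (UNIV \<times> L1) (W \<times> L1)"
      using path_component_UNIV_Times[OF closed_subgroup_Times[OF W L1(1)] K]
      by (simp add: path_component_of_sym)
    with path_component_UNIV_Times[OF assms(3) K] show ?thesis
      unfolding L1_def by (rule path_component_of_trans)
  qed
  have "closed_subgroup ({0} :: (real ^ 'k) set)" "closed_subgroup (UNIV :: (real ^ 'k) set)"
    unfolding closed_subgroup_def is_subgroup_def by auto
  then have "{0} \<times> L1 \<in> path_component_of_set chabauty L" "UNIV \<times> L1 \<in> path_component_of_set chabauty L"
    using joined by (simp_all add: path_component_of_set)
  moreover have "{0} \<times> L1 \<noteq> (UNIV :: (real ^ 'k) set) \<times> L1"
  proof
    assume "{0} \<times> L1 = (UNIV :: (real ^ 'k) set) \<times> L1"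
    then have "{0} = (UNIV :: (real ^ 'k) set)"
      using L1(2) by blast
    then show False
      using UNIV_not_singleton by metis
  qed
  ultimately have "path_component_of_set chabauty L \<noteq> {L}"
    by (metis singletonD)
  then show ?thesis
    using joined unfolding L1_def by blast
qed

end
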